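(* Let $B\in\mathbb{R}^{n\times n}$ be a nonsingular $M$-matrix and $C\in\mathbb{R}^{n\times n}$ an $M$-matrix such that $B^{-1}C\ge 0$ (entrywise), and suppose that $B-C-I$ is a nonsingular $M$-matrix. Then $\rho(X)\neq 1$ for every entrywise nonpositive solution $X\in\mathbb{R}^{n\times n}$ of the quadratic matrix equation $X^2+BX+C=0$.
   Context: $\rho(\cdot)$ denotes spectral radius. Inequalities between matrices are entrywise; a matrix $X$ is nonpositive if $-X\ge 0$ entrywise. A $Z$-matrix is a real square matrix with nonpositive off-diagonal entries; a $Z$-matrix $A=sI-N$ with $N\ge 0$ is an $M$-matrix if $s\ge\rho(N)$ and a nonsingular $M$-matrix if $s>\rho(N)$. *)

theory Defs
  imports "Jordan_Normal_Form.Spectral_Radius"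
begin

definition nonneg_mat :: "real mat \<Rightarrow> bool" where
  "nonneg_mat A \<longleftrightarrow> (\<forall>i<dim_row A. \<forall>j<dim_col A. A $$ (i,j) \<ge> 0)"

definition nonpos_mat :: "real mat \<Rightarrow> bool" where
  "nonpos_mat A \<longleftrightarrow> (\<forall>i<dim_row A. \<forall>j<dim_col A. A $$ (i,j) \<le> 0)"

definition rho :: "real mat \<Rightarrow> real" where
  "rho A = spectral_radius (map_mat complex_of_real A)"

definition M_matrix :: "nat \<Rightarrow> real mat \<Rightarrow> bool" where
  "M_matrix n A \<longleftrightarrow> A \<in> carrier_mat n n \<and>
     (\<exists>s N. N \<in> carrier_mat n n \<and> nonneg_mat N \<and> A = s \<cdot>\<^sub>m 1\<^sub>m n - N \<and> s \<ge> rho N)"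

definition nonsing_M_matrix :: "nat \<Rightarrow> real mat \<Rightarrow> bool" where
  "nonsing_M_matrix n A \<longleftrightarrow> A \<in> carrier_mat n n \<and>
     (\<exists>s N. N \<in> carrier_mat n n \<and> nonneg_mat N \<and> A = s \<cdot>\<^sub>m 1\<^sub>m n - N \<and> s > rho N)"

end

theory Submission
  imports Defs "HOL-Real_Asymp.Real_Asymp"
begin

(* Substituting C = -X^2 - BX gives B - C - I = (B + X - I)(I + X), so I + X is nonsingular.
   Put Y = -X, which is nonnegative with rho(Y) = rho(X). If rho(Y) = 1, the moduli of an
   eigenvector for an eigenvalue of modulus 1 form a vector u >= 0, u <> 0 with u <= Y u.
   On the other hand (I - Y)^-1 >= 0: for t > 1 the partial sums of the Neumann series of Y/t
   are nonnegative, their remainders vanish because Y^k grows only polynomially, and they stay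
   bounded as t -> 1 because I - Y is invertible. Hence u = (I - Y)^-1 (u - Y u) <= 0,
   a contradiction. *)

lemma index_mult_mat_sum:
  assumes "A \<in> carrier_mat n n" "B \<in> carrier_mat n n" "i < n" "j < n"
  shows "(A * B) $$ (i,j) = (\<Sum>k<n. A $$ (i,k) * B $$ (k,j))"
  using assms by (auto simp: scalar_prod_def lessThan_atLeast0 intro!: sum.cong)

lemma index_mult_mat_vec_sum:
  assumes "A \<in> carrier_mat n n" "v \<in> carrier_vec n" "i < n"
  shows "(A *\<^sub>v v) $ i = (\<Sum>j<n. A $$ (i,j) * v $ j)"
  using assms by (auto simp: scalar_prod_def lessThan_atLeast0 intro!: sum.cong)

definition norm1_mat :: "nat \<Rightarrow> real mat \<Rightarrow> real" where
  "norm1_mat n A = (\<Sum>i<n. \<Sum>j<n. \<bar>A $$ (i,j)\<bar>)"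

lemma norm1_mat_nonneg: "0 \<le> norm1_mat n A"
  unfolding norm1_mat_def by (intro sum_nonneg) auto

lemma abs_index_le_norm1_mat:
  assumes "i < n" "j < n"
  shows "\<bar>A $$ (i,j)\<bar> \<le> norm1_mat n A"
proof -
  have "\<bar>A $$ (i,j)\<bar> \<le> (\<Sum>j<n. \<bar>A $$ (i,j)\<bar>)"
    using assms by (intro member_le_sum) auto
  also have "\<dots> \<le> norm1_mat n A"
    unfolding norm1_mat_def using assms
    by (intro member_le_sum[where f = "\<lambda>i. \<Sum>j<n. \<bar>A $$ (i,j)\<bar>"]) (auto intro: sum_nonneg)
  finally show ?thesis .
qed

lemma norm1_mat_minus:
  "A \<in> carrier_mat n n \<Longrightarrow> B \<in> carrier_mat n n \<Longrightarrow> norm1_mat n (A - B) \<le> norm1_mat n A + norm1_mat n B"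
  unfolding norm1_mat_def sum.distrib[symmetric] by (intro sum_mono) (auto intro: abs_triangle_ineq4)

lemma norm1_mat_smult: "A \<in> carrier_mat n n \<Longrightarrow> norm1_mat n (c \<cdot>\<^sub>m A) = \<bar>c\<bar> * norm1_mat n A"
  unfolding norm1_mat_def sum_distrib_left by (auto simp: abs_mult intro!: sum.cong)

lemma norm1_mat_mult:
  assumes A: "A \<in> carrier_mat n n" and B: "B \<in> carrier_mat n n"
  shows "norm1_mat n (A * B) \<le> norm1_mat n A * norm1_mat n B"
proof -
  have "norm1_mat n (A * B) = (\<Sum>i<n. \<Sum>k<n. \<bar>\<Sum>j<n. A $$ (i,j) * B $$ (j,k)\<bar>)"
    unfolding norm1_mat_def using A B by (intro sum.cong refl) (simp add: index_mult_mat_sum del: index_mult_mat)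
  also have "\<dots> \<le> (\<Sum>i<n. \<Sum>k<n. \<Sum>j<n. \<bar>A $$ (i,j)\<bar> * \<bar>B $$ (j,k)\<bar>)"
    by (intro sum_mono order_trans[OF sum_abs]) (simp add: abs_mult)
  also have "\<dots> = (\<Sum>i<n. \<Sum>j<n. \<bar>A $$ (i,j)\<bar> * (\<Sum>k<n. \<bar>B $$ (j,k)\<bar>))"
    by (rule sum.cong[OF refl], subst sum.swap) (simp add: sum_distrib_left)
  also have "\<dots> \<le> (\<Sum>i<n. \<Sum>j<n. \<bar>A $$ (i,j)\<bar> * norm1_mat n B)"
    unfolding norm1_mat_def
    by (intro sum_mono mult_left_mono member_le_sum[where f = "\<lambda>j. \<Sum>k<n. \<bar>B $$ (j,k)\<bar>"])
      (auto intro: sum_nonneg)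
  also have "\<dots> = norm1_mat n A * norm1_mat n B"
    unfolding norm1_mat_def sum_distrib_right by simp
  finally show ?thesis .
qed

primrec geom_sum_mat :: "nat \<Rightarrow> 'a :: semiring_1 mat \<Rightarrow> nat \<Rightarrow> 'a mat" where
  "geom_sum_mat n A 0 = 0\<^sub>m n n"
| "geom_sum_mat n A (Suc k) = 1\<^sub>m n + A * geom_sum_mat n A k"

lemma geom_sum_mat_carrier: "A \<in> carrier_mat n n \<Longrightarrow> geom_sum_mat n A k \<in> carrier_mat n n"
  by (induction k) auto

lemma geom_sum_mat_nonneg:
  assumes A: "A \<in> carrier_mat n n" "nonneg_mat A"
  shows "nonneg_mat (geom_sum_mat n A k)"
proof (induction k)
  case (Suc k)
  have "0 \<le> (A * geom_sum_mat n A k) $$ (i,j)" if "i < n" "j < n" for i j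
    using that A Suc geom_sum_mat_carrier[OF A(1), of k]
    by (auto simp: index_mult_mat_sum nonneg_mat_def simp del: index_mult_mat
        intro!: sum_nonneg mult_nonneg_nonneg)
  then show ?case using A geom_sum_mat_carrier[OF A(1), of k] by (auto simp: nonneg_mat_def)
qed (simp add: nonneg_mat_def)

lemma pow_mat_commute: "A \<in> carrier_mat n n \<Longrightarrow> A * A ^\<^sub>m k = A ^\<^sub>m k * A"
proof (induction k)
  case (Suc k)
  then show ?case by (simp add: assoc_mult_mat[symmetric, of _ n n _ n _ n])
qed simp

lemma geom_sum_mat_mult_one_minus:
  fixes A :: "'a :: comm_ring_1 mat"
  assumes A: "A \<in> carrier_mat n n"
  shows "geom_sum_mat n A k * (1\<^sub>m n - A) = 1\<^sub>m n - A ^\<^sub>m k"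
proof (induction k)
  case (Suc k)
  let ?Q = "geom_sum_mat n A k"
  have Q: "?Q \<in> carrier_mat n n" using geom_sum_mat_carrier[OF A] .
  have IA: "1\<^sub>m n - A \<in> carrier_mat n n" using A by (simp add: minus_carrier_mat)
  have "geom_sum_mat n A (Suc k) * (1\<^sub>m n - A) = (1\<^sub>m n - A) + A * (?Q * (1\<^sub>m n - A))"
    using add_mult_distrib_mat[OF one_carrier_mat mult_carrier_mat[OF A Q] IA] A Q IA by simp
  also have "A * (?Q * (1\<^sub>m n - A)) = A - A ^\<^sub>m Suc k"
    using A by (simp add: Suc mult_minus_distrib_mat[OF A one_carrier_mat pow_carrier_mat] pow_mat_commute)
  also have "(1\<^sub>m n - A) + (A - A ^\<^sub>m Suc k) = 1\<^sub>m n - A ^\<^sub>m Suc k"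
    using A by auto
  finally show ?case .
qed (use A in \<open>auto intro!: eq_matI\<close>)

lemma pow_mat_smult:
  fixes A :: "'a :: comm_ring_1 mat"
  assumes A: "A \<in> carrier_mat n n"
  shows "(c \<cdot>\<^sub>m A) ^\<^sub>m k = c ^ k \<cdot>\<^sub>m A ^\<^sub>m k"
proof (induction k)
  case (Suc k)
  have "(c \<cdot>\<^sub>m A) ^\<^sub>m Suc k = (c ^ k \<cdot>\<^sub>m A ^\<^sub>m k) * (c \<cdot>\<^sub>m A)" using Suc by simp
  also have "\<dots> = c ^ Suc k \<cdot>\<^sub>m A ^\<^sub>m Suc k"
    using A by (auto simp: mult_smult_assoc_mat mult_smult_distrib)
  finally show ?case .
qed (auto intro!: eq_matI)

lemma norm1_mat_pow_tendsto_0: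
  assumes A: "A \<in> carrier_mat n n" and rho: "rho A \<le> 1" and t: "1 < t"
  shows "(\<lambda>k. norm1_mat n (((1 / t) \<cdot>\<^sub>m A) ^\<^sub>m k)) \<longlonglongrightarrow> 0"
proof -
  let ?Ac = "map_mat complex_of_real A"
  obtain c1 c2 where bound: "\<And>k. norm_bound (?Ac ^\<^sub>m k) (c1 + c2 * real k ^ (n - 1))"
    using spectral_radius_jnf_norm_bound_le_1_upper_triangular[of ?Ac n] A rho
    unfolding rho_def by auto
  have entry: "\<bar>(A ^\<^sub>m k) $$ (i,j)\<bar> \<le> c1 + c2 * real k ^ (n - 1)" if "i < n" "j < n" for i j k
  proof -
    have "norm_bound (map_mat complex_of_real (A ^\<^sub>m k)) (c1 + c2 * real k ^ (n - 1))"
      unfolding of_real_hom.mat_hom_pow[OF A] by (rule bound)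
    then show ?thesis using that A unfolding norm_bound_def by auto
  qed
  have le: "norm1_mat n (((1 / t) \<cdot>\<^sub>m A) ^\<^sub>m k)
      \<le> real n * real n * c1 / t ^ k + real n * real n * c2 * (real k ^ (n - 1) / t ^ k)" for k
  proof -
    have "norm1_mat n (A ^\<^sub>m k) \<le> (\<Sum>i<n. \<Sum>j<n. c1 + c2 * real k ^ (n - 1))"
      unfolding norm1_mat_def by (intro sum_mono entry) auto
    then show ?thesis
      using A t by (simp add: pow_mat_smult norm1_mat_smult power_one_over field_simps)
  qed
  have lim: "(\<lambda>k. real n * real n * c1 / t ^ k + real n * real n * c2 * (real k ^ (n - 1) / t ^ k))
      \<longlonglongrightarrow> 0"
  proof (intro tendsto_add_zero tendsto_mult_right_zero)
    show "(\<lambda>k. real n * real n * c1 / t ^ k) \<longlonglongrightarrow> 0" using t by real_asymp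
    show "(\<lambda>k. real k ^ (n - 1) / t ^ k) \<longlonglongrightarrow> 0" using t by real_asymp
  qed
  show ?thesis
    by (intro tendsto_sandwich[OF _ _ tendsto_const lim] always_eventually allI norm1_mat_nonneg le)
qed

lemma eigenvector_uminus:
  assumes "A \<in> carrier_mat n n"
  shows "eigenvector (- A) v (- e) \<longleftrightarrow> eigenvector A v e"
proof -
  have "(- e) \<cdot>\<^sub>v v = - (e \<cdot>\<^sub>v v)" by (auto intro!: eq_vecI)
  then show ?thesis using assms unfolding eigenvector_def by auto
qed

lemma spectral_radius_uminus:
  assumes "A \<in> carrier_mat n n"
  shows "spectral_radius (- A) = spectral_radius A"
proof -
  have "spectrum (- A) = uminus ` spectrum A"
    using eigenvector_uminus[OF assms] unfolding spectrum_def eigenvalue_def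
    by (auto simp: image_iff) (metis minus_minus)
  then show ?thesis unfolding spectral_radius_def by (simp add: image_image)
qed

lemma rho_uminus:
  assumes X: "X \<in> carrier_mat n n"
  shows "rho (- X) = rho X"
proof -
  have "map_mat complex_of_real (- X) = - map_mat complex_of_real X" by (auto intro!: eq_matI)
  then show ?thesis unfolding rho_def using X by (simp add: spectral_radius_uminus[of _ n])
qed

lemma nonsing_M_matrix_det_nonzero:
  assumes "nonsing_M_matrix n A"
  shows "det A \<noteq> 0"
proof
  assume det: "det A = 0"
  from assms obtain s N where A: "A \<in> carrier_mat n n" and N: "N \<in> carrier_mat n n"
    and A_eq: "A = s \<cdot>\<^sub>m 1\<^sub>m n - N" and s: "rho N < s"
    unfolding nonsing_M_matrix_def by auto
  have "char_matrix N s = - A" using N by (auto simp: char_matrix_def A_eq intro!: eq_matI)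
  then have "eigenvalue N s" using det det_0_negate[OF A] by (simp add: eigenvalue_det[OF N])
  then have ev: "eigenvalue (map_mat complex_of_real N) (complex_of_real s)"
    by (rule of_real_hom.eigenvalue_hom[OF N])
  then have "\<bar>s\<bar> \<le> rho N"
    unfolding rho_def using N eigenvalue_imp_nonzero_dim[OF _ ev]
    by (intro spectral_radius_mem_max(2)[of _ n] rev_image_eqI[of "complex_of_real s"])
      (auto simp: spectrum_def)
  with s show False by simp
qed

lemma subinvariant_vector_if_rho_ge_1:
  assumes Y: "Y \<in> carrier_mat n n" "nonneg_mat Y" and n: "0 < n" and rho: "1 \<le> rho Y"
  obtains u where "u \<in> carrier_vec n" "u \<noteq> 0\<^sub>v n" "\<forall>i<n. 0 \<le> u $ i"
    "\<forall>i<n. u $ i \<le> (Y *\<^sub>v u) $ i"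
proof -
  let ?Yc = "map_mat complex_of_real Y"
  have Yc: "?Yc \<in> carrier_mat n n" using Y by simp
  obtain lam where "eigenvalue ?Yc lam" and lam: "cmod lam = rho Y"
    using spectral_radius_mem_max(1)[OF Yc n] unfolding rho_def spectrum_def by auto
  then obtain w where w: "w \<in> carrier_vec n" "w \<noteq> 0\<^sub>v n" "?Yc *\<^sub>v w = lam \<cdot>\<^sub>v w"
    unfolding eigenvalue_def eigenvector_def using Yc by auto
  define u where "u = vec n (\<lambda>i. cmod (w $ i))"
  have "u \<noteq> 0\<^sub>v n"
    using w(1,2) unfolding u_def by (auto simp: vec_eq_iff)
  moreover have "u $ i \<le> (Y *\<^sub>v u) $ i" if i: "i < n" for i
  proof -
    have "u $ i \<le> cmod lam * u $ i"
      using i mult_right_mono[OF rho norm_ge_zero, of "w $ i"] lam unfolding u_def by simp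
    also have "\<dots> = cmod ((?Yc *\<^sub>v w) $ i)" using w i unfolding u_def by (simp add: norm_mult)
    also have "\<dots> = cmod (\<Sum>j<n. ?Yc $$ (i,j) * w $ j)"
      by (simp only: index_mult_mat_vec_sum[OF Yc w(1) i])
    also have "\<dots> \<le> (\<Sum>j<n. Y $$ (i,j) * u $ j)"
      using Y i unfolding u_def nonneg_mat_def
      by (intro order_trans[OF norm_sum] sum_mono) (auto simp: norm_mult)
    also have "\<dots> = (Y *\<^sub>v u) $ i" using Y i by (subst index_mult_mat_vec_sum[of _ n]) (auto simp: u_def)
    finally show ?thesis .
  qed
  ultimately show ?thesis using that[of u] unfolding u_def by auto
qed

(* R is the K-th partial sum of the resolvent (t I - Y)^-1 = sum k. Y^k / t^(k+1). *)
lemma inverse_one_minus_geom_sum_eq: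
  fixes Y W :: "'a :: field mat" and K :: nat
  assumes Y: "Y \<in> carrier_mat n n" and W: "W \<in> carrier_mat n n"
    and inv: "(1\<^sub>m n - Y) * W = 1\<^sub>m n" and t: "t \<noteq> 0"
  defines "Z \<equiv> (1 / t) \<cdot>\<^sub>m Y"
  defines "R \<equiv> (1 / t) \<cdot>\<^sub>m geom_sum_mat n Z K"
  shows "R = W - Z ^\<^sub>m K * W - (t - 1) \<cdot>\<^sub>m (R * W)"
proof -
  have Z: "Z \<in> carrier_mat n n" using Y by (simp add: Z_def)
  have Q: "geom_sum_mat n Z K \<in> carrier_mat n n" by (rule geom_sum_mat_carrier[OF Z])
  have R: "R \<in> carrier_mat n n" using Q by (simp add: R_def)
  have IZ: "1\<^sub>m n - Z \<in> carrier_mat n n" and IY: "1\<^sub>m n - Y \<in> carrier_mat n n"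
    and IZK: "1\<^sub>m n - Z ^\<^sub>m K \<in> carrier_mat n n"
    using Y Z by (auto simp: minus_carrier_mat)
  have split: "1\<^sub>m n - Y = t \<cdot>\<^sub>m (1\<^sub>m n - Z) - (t - 1) \<cdot>\<^sub>m 1\<^sub>m n"
    using Y t by (auto simp: Z_def field_simps intro!: eq_matI)
  have "R * (1\<^sub>m n - Z) = (1 / t) \<cdot>\<^sub>m (1\<^sub>m n - Z ^\<^sub>m K)"
    unfolding R_def mult_smult_assoc_mat[OF Q IZ] geom_sum_mat_mult_one_minus[OF Z] ..
  then have RY: "R * (1\<^sub>m n - Y) = 1\<^sub>m n - Z ^\<^sub>m K - (t - 1) \<cdot>\<^sub>m R"
    using R Z t unfolding split
    by (simp add: mult_minus_distrib_mat[OF R smult_carrier_mat[OF IZ] smult_carrier_mat[OF one_carrier_mat]]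
        mult_smult_distrib[OF R IZ] mult_smult_distrib[OF R one_carrier_mat], auto intro!: eq_matI)
  have "R = R * ((1\<^sub>m n - Y) * W)" using R inv by simp
  also have "\<dots> = (1\<^sub>m n - Z ^\<^sub>m K - (t - 1) \<cdot>\<^sub>m R) * W"
    using assoc_mult_mat[OF R IY W] RY by simp
  also have "\<dots> = W - Z ^\<^sub>m K * W - (t - 1) \<cdot>\<^sub>m (R * W)"
    using W by (simp add: minus_mult_distrib_mat[OF IZK smult_carrier_mat[OF R] W]
        minus_mult_distrib_mat[OF one_carrier_mat pow_carrier_mat[OF Z] W] mult_smult_assoc_mat[OF R W])
  finally show ?thesis .
qed

lemma inverse_one_minus_index_lower_bound:
  fixes K :: nat
  assumes Y: "Y \<in> carrier_mat n n" "nonneg_mat Y" and W: "W \<in> carrier_mat n n"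
    and inv: "(1\<^sub>m n - Y) * W = 1\<^sub>m n" and t: "1 < t"
    and small: "(t - 1) * norm1_mat n W \<le> 1 / 2" and ij: "i < n" "j < n"
  defines "z \<equiv> norm1_mat n (((1 / t) \<cdot>\<^sub>m Y) ^\<^sub>m K)" and "\<omega> \<equiv> norm1_mat n W"
  shows "- (z * \<omega> + 2 * (t - 1) * (1 + z) * \<omega>\<^sup>2) \<le> W $$ (i,j)"
proof -
  define Z where "Z = (1 / t) \<cdot>\<^sub>m Y"
  define R where "R = (1 / t) \<cdot>\<^sub>m geom_sum_mat n Z K"
  define E where "E = Z ^\<^sub>m K * W"
  have Z: "Z \<in> carrier_mat n n" "nonneg_mat Z"
    using Y t by (auto simp: Z_def nonneg_mat_def)
  have R: "R \<in> carrier_mat n n" "nonneg_mat R"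
    using geom_sum_mat_carrier[OF Z(1)] geom_sum_mat_nonneg[OF Z, of K] t
    by (auto simp: R_def nonneg_mat_def)
  have E: "E \<in> carrier_mat n n" unfolding E_def using Z(1) W by (rule mult_carrier_mat[OF pow_carrier_mat])
  have R_eq: "R = W - E - (t - 1) \<cdot>\<^sub>m (R * W)"
    unfolding R_def E_def Z_def using inverse_one_minus_geom_sum_eq[OF Y(1) W inv] t by simp
  have norm_E: "norm1_mat n E \<le> z * \<omega>"
    unfolding E_def z_def \<omega>_def Z_def[symmetric] using norm1_mat_mult[OF pow_carrier_mat[OF Z(1)] W] .
  have "norm1_mat n R = norm1_mat n (W - E - (t - 1) \<cdot>\<^sub>m (R * W))" by (rule arg_cong[OF R_eq])
  also have "\<dots> \<le> norm1_mat n W + norm1_mat n E + (t - 1) * norm1_mat n (R * W)"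
    using norm1_mat_minus[OF minus_carrier_mat[OF E, of W] smult_carrier_mat[OF mult_carrier_mat[OF R(1) W]],
        of "t - 1"]
      norm1_mat_minus[OF W E] norm1_mat_smult[OF mult_carrier_mat[OF R(1) W], of "t - 1"] t
    by simp
  also have "\<dots> \<le> \<omega> + z * \<omega> + (t - 1) * (norm1_mat n R * \<omega>)"
    using norm_E norm1_mat_mult[OF R(1) W] t unfolding \<omega>_def by (intro add_mono mult_left_mono) auto
  also have "\<dots> \<le> \<omega> + z * \<omega> + norm1_mat n R / 2"
    using mult_right_mono[OF small norm1_mat_nonneg[of n R]] unfolding \<omega>_def by (simp add: ac_simps)
  finally have norm_R: "norm1_mat n R \<le> 2 * (1 + z) * \<omega>" by (simp add: algebra_simps)
  have "- (z * \<omega>) \<le> E $$ (i,j)"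
    using abs_index_le_norm1_mat[OF ij, of E] norm_E by simp
  moreover have "- (2 * (1 + z) * \<omega> * \<omega>) \<le> (R * W) $$ (i,j)"
    using abs_index_le_norm1_mat[OF ij, of "R * W"] norm1_mat_mult[OF R(1) W]
      mult_right_mono[OF norm_R norm1_mat_nonneg[of n W]]
    unfolding \<omega>_def by linarith
  then have "(t - 1) * - (2 * (1 + z) * \<omega> * \<omega>) \<le> (t - 1) * (R * W) $$ (i,j)"
    using t by (intro mult_left_mono) auto
  moreover have "0 \<le> R $$ (i,j)" using R ij by (simp add: nonneg_mat_def)
  moreover have "R $$ (i,j) = W $$ (i,j) - E $$ (i,j) - (t - 1) * (R * W) $$ (i,j)"
    using arg_cong[OF R_eq, of "\<lambda>M. M $$ (i,j)"] ij R E W by simp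
  ultimately show ?thesis by (simp add: power2_eq_square algebra_simps)
qed

lemma inverse_one_minus_nonneg:
  assumes Y: "Y \<in> carrier_mat n n" "nonneg_mat Y" "rho Y \<le> 1"
    and W: "W \<in> carrier_mat n n" and inv: "(1\<^sub>m n - Y) * W = 1\<^sub>m n"
  shows "nonneg_mat W"
proof -
  let ?\<omega> = "norm1_mat n W"
  have bound: "- (2 * \<delta> * ?\<omega>\<^sup>2) \<le> W $$ (i,j)"
    if \<delta>: "0 < \<delta>" "\<delta> * ?\<omega> \<le> 1 / 2" and ij: "i < n" "j < n" for \<delta> i j
  proof -
    let ?z = "\<lambda>K. norm1_mat n (((1 / (1 + \<delta>)) \<cdot>\<^sub>m Y) ^\<^sub>m K)"
    have "?z \<longlonglongrightarrow> 0" using norm1_mat_pow_tendsto_0[OF Y(1,3)] \<delta> by simp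
    then have "(\<lambda>K. - (?z K * ?\<omega> + 2 * \<delta> * (1 + ?z K) * ?\<omega>\<^sup>2))
        \<longlonglongrightarrow> - (0 * ?\<omega> + 2 * \<delta> * (1 + 0) * ?\<omega>\<^sup>2)"
      by (intro tendsto_intros)
    moreover have "- (?z K * ?\<omega> + 2 * \<delta> * (1 + ?z K) * ?\<omega>\<^sup>2) \<le> W $$ (i,j)" for K
      using inverse_one_minus_index_lower_bound[OF Y(1,2) W inv _ _ ij, of "1 + \<delta>" K] \<delta> by simp
    ultimately show ?thesis by (intro LIMSEQ_le_const2) auto
  qed
  have "0 \<le> W $$ (i,j)" if ij: "i < n" "j < n" for i j
  proof (rule tendsto_le[OF trivial_limit_at_right_real tendsto_const])
    show "((\<lambda>\<delta>. - (2 * \<delta> * ?\<omega>\<^sup>2)) \<longlongrightarrow> 0) (at_right 0)"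
      by real_asymp
    have "\<delta> * ?\<omega> \<le> 1 / 2" if "0 < \<delta>" "\<delta> < 1 / (2 * ?\<omega> + 1)" for \<delta>
      using that norm1_mat_nonneg[of n W] by (simp add: field_simps)
    then show "\<forall>\<^sub>F \<delta> in at_right 0. - (2 * \<delta> * ?\<omega>\<^sup>2) \<le> W $$ (i,j)"
      unfolding eventually_at_right_field using norm1_mat_nonneg[of n W] bound ij
      by (intro exI[of _ "1 / (2 * ?\<omega> + 1)"]) auto
  qed
  then show ?thesis using W by (simp add: nonneg_mat_def)
qed

lemma det_one_minus_eq_0_if_rho_eq_1:
  assumes Y: "Y \<in> carrier_mat n n" "nonneg_mat Y" and n: "0 < n" and rho: "rho Y = 1"
  shows "det (1\<^sub>m n - Y) = 0"
proof (rule ccontr)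
  have IY: "1\<^sub>m n - Y \<in> carrier_mat n n" using Y by (simp add: minus_carrier_mat)
  assume "det (1\<^sub>m n - Y) \<noteq> 0"
  from det_non_zero_imp_unit[OF IY this, of "()"] obtain W where W: "W \<in> carrier_mat n n"
    and right_inv: "(1\<^sub>m n - Y) * W = 1\<^sub>m n" and left_inv: "W * (1\<^sub>m n - Y) = 1\<^sub>m n"
    unfolding Units_def ring_mat_def by auto
  have W_nonneg: "nonneg_mat W" using inverse_one_minus_nonneg[OF Y] rho W right_inv by simp
  obtain u where u: "u \<in> carrier_vec n" "u \<noteq> 0\<^sub>v n" "\<forall>i<n. 0 \<le> u $ i"
    "\<forall>i<n. u $ i \<le> (Y *\<^sub>v u) $ i"
    using subinvariant_vector_if_rho_ge_1[OF Y n] rho by auto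
  define v where "v = (1\<^sub>m n - Y) *\<^sub>v u"
  have v: "v \<in> carrier_vec n" "\<forall>j<n. v $ j \<le> 0"
    using u Y by (auto simp: v_def minus_mult_distrib_mat_vec[OF one_carrier_mat Y(1) u(1)])
  have "u = W *\<^sub>v v"
    using u(1) W IY left_inv by (simp add: v_def assoc_mult_mat_vec[symmetric, OF W IY u(1)])
  then have "u $ i \<le> 0" if i: "i < n" for i
    using W_nonneg W v i
    by (simp add: index_mult_mat_vec_sum[OF W v(1) i] nonneg_mat_def)
      (intro sum_nonpos mult_nonneg_nonpos, auto)
  with u(1-3) show False by (auto simp: vec_eq_iff intro: order.antisym)
qed

lemma quadratic_matrix_equation_factorization:
  fixes B C X :: "'a :: comm_ring_1 mat"
  assumes B: "B \<in> carrier_mat n n" and C: "C \<in> carrier_mat n n" and X: "X \<in> carrier_mat n n"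
    and eq: "X * X + B * X + C = 0\<^sub>m n n"
  shows "B - C - 1\<^sub>m n = (B + X - 1\<^sub>m n) * (1\<^sub>m n + X)"
proof -
  have BX: "B + X \<in> carrier_mat n n" using B X by simp
  have BX1: "B + X - 1\<^sub>m n \<in> carrier_mat n n" using BX by (simp add: minus_carrier_mat)
  have "(B + X - 1\<^sub>m n) * (1\<^sub>m n + X) = (B + X - 1\<^sub>m n) + (B * X + X * X - X)"
    using BX1 X B
    by (simp add: mult_add_distrib_mat[OF BX1 one_carrier_mat X] minus_mult_distrib_mat[OF BX one_carrier_mat X]
        add_mult_distrib_mat[OF B X X])
  also have "\<dots> = B - C - 1\<^sub>m n"
  proof (rule eq_matI)
    fix i j assume "i < dim_row (B - C - 1\<^sub>m n)" "j < dim_col (B - C - 1\<^sub>m n)"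
    then show "(B + X - 1\<^sub>m n + (B * X + X * X - X)) $$ (i, j) = (B - C - 1\<^sub>m n) $$ (i, j)"
      using arg_cong[OF eq, of "\<lambda>M. M $$ (i,j)"] B C X by (simp add: algebra_simps)
  qed (use B C X in auto)
  finally show ?thesis ..
qed

theorem lemma3p2:
  fixes n :: nat and B C X :: "real mat"
  assumes n: "n > 0"
    and B: "nonsing_M_matrix n B"
    and C: "M_matrix n C"
    and BC: "\<forall>Bi \<in> carrier_mat n n. Bi * B = 1\<^sub>m n \<longrightarrow> nonneg_mat (Bi * C)"
    and BCI: "nonsing_M_matrix n (B - C - 1\<^sub>m n)"
    and X: "X \<in> carrier_mat n n"
    and Xnp: "nonpos_mat X"
    and eq: "X * X + B * X + C = 0\<^sub>m n n"
  shows "rho X \<noteq> 1"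
proof
  assume rho: "rho X = 1"
  have Bc: "B \<in> carrier_mat n n" using B unfolding nonsing_M_matrix_def by auto
  have Cc: "C \<in> carrier_mat n n" using C unfolding M_matrix_def by auto
  have "det (B + X - 1\<^sub>m n) * det (1\<^sub>m n + X) \<noteq> 0"
    using nonsing_M_matrix_det_nonzero[OF BCI] Bc X
    by (simp add: quadratic_matrix_equation_factorization[OF Bc Cc X eq] det_mult[of _ n] minus_carrier_mat)
  moreover have "1\<^sub>m n + X = 1\<^sub>m n - (- X)" using X by (auto intro!: eq_matI)
  moreover have "det (1\<^sub>m n - (- X)) = 0"
    using X Xnp rho_uminus[OF X] rho n
    by (intro det_one_minus_eq_0_if_rho_eq_1) (auto simp: nonneg_mat_def nonpos_mat_def)
  ultimately show False by simp
qed

end
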